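(* Let $p$ be a prime, $a\ge 1$ an integer, $\tilde\chi$ a Dirichlet character modulo $p^a$, and $b:=\lceil a/3\rceil$. (i) If $p$ is odd, there exists an integer $L$, depending only on $\tilde\chi,p,a,b$ (and not on $x$), such that for all $x\in\mathbb{Z}$, $$\tilde\chi(1+p^b x)=\exp\!\left(\frac{4\pi i\,L\,x}{p^{a-b}}-\frac{2\pi i\,L\,x^2}{p^{a-2b}}\right).$$ (ii) If $p=2$ and $a>3$, there exists an integer $L_1$, depending only on $\tilde\chi$ and $b$ (and not on $x$), such that for all $x\in\mathbb{Z}$, $$\tilde\chi(1+2^b x)=\exp\!\left(\frac{2\pi i\,L_1\,x}{2^{a-b}}-\frac{\pi i\,L_1\,x^2}{2^{a-2b}}\right).$$ (iii) If $p=2$ and $a\le 3$, there exist integers $L_2,L_3$ with $-1\le L_2,L_3\le 2$ such that $\tilde\chi(1+2^b x)=(-1)^{(L_2x+L_3x^2)/2}$ for all $x\in\mathbb{Z}$ (here $L_2x+L_3x^2$ is always even). *)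

theory Defs
  imports "HOL-Analysis.Analysis"
begin

definition dirichlet_character :: "nat \<Rightarrow> (int \<Rightarrow> complex) \<Rightarrow> bool" where
  "dirichlet_character q chi \<longleftrightarrow>
     q \<ge> 1 \<and>
     (\<forall>m n. chi (m * n) = chi m * chi n) \<and>
     (\<forall>n. chi (n + int q) = chi n) \<and>
     (\<forall>n. chi n = 0 \<longleftrightarrow> \<not> coprime n (int q))"

end

theory Submission
  imports Defs
begin

text \<open>Write q = p^b and N = p^(a-b). Since a \<le> 3b, N divides q^2, so modulo N the truncated
  logarithm x - e x^2 of 1 + q x (with 2e \<equiv> q mod N, i.e. e standing for q/2) turns the
  product (1 + q x)(1 + q y) = 1 + q (x + y + q x y) into a sum, and it is a bijection of the
  residues mod N because p divides e. Hence x \<mapsto> chi (1 + q x) is an additive character of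
  \<int>/N read through this logarithm, i.e. exp (2 \<pi> i M (x - e x^2) / N). For odd p one takes
  e = q (p^a + 1)/2, for p = 2 simply e = 2^(b-1); for modulus 2, 4 or 8 the values of chi at
  3 and 5, both \<plusminus>1, determine everything.\<close>

lemma dirichlet_character_one:
  assumes "dirichlet_character q chi"
  shows "chi 1 = 1"
proof -
  have "chi 1 = chi 1 * chi 1" "chi 1 \<noteq> 0"
    using assms unfolding dirichlet_character_def by (metis mult_1, simp)
  then show ?thesis by simp
qed

lemma dirichlet_character_cong:
  assumes "dirichlet_character q chi" and "int q dvd m - n"
  shows "chi m = chi n"
proof -
  have shift: "chi (n + int q * z) = chi n" for z
  proof (induction z rule: int_induct[where k = 0])
    case (step1 i)
    then show ?case
      using assms(1) unfolding dirichlet_character_def by (metis add.assoc distrib_left mult.right_neutral)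
  next
    case (step2 i)
    have "n + int q * i = (n + int q * (i - 1)) + int q" by (simp add: algebra_simps)
    then show ?case
      using step2 assms(1) unfolding dirichlet_character_def by metis
  qed simp
  from assms(2) obtain z where "m = n + int q * z" by (auto simp: dvd_def algebra_simps)
  then show ?thesis using shift by simp
qed

lemma mult_hom_int_eq_power_int:
  fixes g :: "int \<Rightarrow> 'a::field"
  assumes hom: "\<And>s t. g (s + t) = g s * g t" and g0: "g 0 = 1"
  shows "g s = g 1 powi s"
proof -
  have "g 1 * g (-1) = 1" using hom[of 1 "-1"] g0 by simp
  then have g1: "g 1 \<noteq> 0" by auto
  show ?thesis
  proof (induction s rule: int_induct[where k = 0])
    case (step1 i)
    then show ?case using hom[of i 1] g1 by (simp add: power_int_add_1)
  next
    case (step2 i)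
    have "g i = g (i - 1) * g 1" using hom[of "i - 1" 1] by simp
    then show ?case using step2 g1 by (simp add: power_int_diff field_simps)
  qed (simp add: g0)
qed

lemma periodic_mult_hom_int_eq_exp:
  fixes g :: "int \<Rightarrow> complex" and N :: nat
  assumes "N \<ge> 1" and hom: "\<And>s t. g (s + t) = g s * g t" and "g 0 = 1" and "g (int N) = 1"
  shows "\<exists>M::int. \<forall>s. g s = exp (2 * pi * \<i> * of_int M * of_int s / of_nat N)"
proof -
  have "g 1 ^ N = 1" using mult_hom_int_eq_power_int[OF hom, of "int N"] assms by simp
  then obtain j where j: "g 1 = exp (2 * of_real pi * \<i> * of_nat j / of_nat N)"
    using complex_roots_unity[OF \<open>N \<ge> 1\<close>] by blast
  have "g s = exp (2 * pi * \<i> * of_int (int j) * of_int s / of_nat N)" for s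
    using mult_hom_int_eq_power_int[OF hom \<open>g 0 = 1\<close>, of s]
    by (simp add: j exp_power_int mult_ac)
  then show ?thesis by blast
qed

lemma inj_cong_imp_surj_cong:
  fixes f :: "int \<Rightarrow> int" and N :: int
  assumes "N > 0" and inj: "\<And>x y. N dvd f x - f y \<Longrightarrow> N dvd x - y"
  shows "\<exists>x. N dvd f x - t"
proof -
  define g where "g x = f x mod N" for x
  have "inj_on g {0..<N}"
  proof (rule inj_onI)
    fix x y assume "x \<in> {0..<N}" "y \<in> {0..<N}" "g x = g y"
    then have "N dvd x - y" using inj by (simp add: g_def mod_eq_dvd_iff)
    then have "x mod N = y mod N" by (simp add: mod_eq_dvd_iff)
    then show "x = y" using \<open>x \<in> {0..<N}\<close> \<open>y \<in> {0..<N}\<close> by simp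
  qed
  moreover have "g ` {0..<N} \<subseteq> {0..<N}" using \<open>N > 0\<close> by (auto simp: g_def)
  ultimately have "g ` {0..<N} = {0..<N}" by (intro endo_inj_surj) auto
  moreover have "t mod N \<in> {0..<N}" using \<open>N > 0\<close> by auto
  ultimately obtain x where "g x = t mod N" by (metis imageE)
  then show ?thesis by (auto simp: g_def mod_eq_dvd_iff)
qed

definition trunc_log :: "int \<Rightarrow> int \<Rightarrow> int" where
  "trunc_log e x = x - e * x\<^sup>2"

lemma trunc_log_0 [simp]: "trunc_log e 0 = 0"
  by (simp add: trunc_log_def)

lemma trunc_log_mult_cong:
  assumes "N dvd q\<^sup>2" and "N dvd 2 * e - q"
  shows "N dvd trunc_log e (x + y + q * x * y) - (trunc_log e x + trunc_log e y)"
proof -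
  obtain k where k: "2 * e - q = N * k" using assms(2) by (auto simp: dvd_def)
  obtain j where j: "q\<^sup>2 = N * j" using assms(1) by (auto simp: dvd_def)
  have "trunc_log e (x + y + q * x * y) - (trunc_log e x + trunc_log e y)
      = - x * y * (2 * e - q) - ((2 * e - q) * q + q\<^sup>2) * x * y * (x + y) - e * q\<^sup>2 * x\<^sup>2 * y\<^sup>2"
    unfolding trunc_log_def by algebra
  also have "\<dots> = N * (- k * x * y - (k * q + j) * x * y * (x + y) - e * j * x\<^sup>2 * y\<^sup>2)"
    unfolding k j by (simp add: algebra_simps)
  finally show ?thesis by simp
qed

lemma trunc_log_inj_cong:
  assumes "\<And>z. coprime (1 - e * z) N" and "N dvd trunc_log e x - trunc_log e y"
  shows "N dvd x - y"
proof -
  have "trunc_log e x - trunc_log e y = (x - y) * (1 - e * (x + y))"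
    by (simp add: trunc_log_def algebra_simps power2_eq_square)
  moreover have "coprime N (1 - e * (x + y))" using assms(1) by (simp add: coprime_commute)
  ultimately show ?thesis using assms(2) by (simp add: coprime_dvd_mult_left_iff)
qed

lemma dirichlet_character_one_plus_eq_exp_trunc_log:
  fixes q e :: int and N Q :: nat
  assumes dc: "dirichlet_character Q chi" and QN: "int Q = q * int N" and "N \<ge> 1"
    and "int N dvd q\<^sup>2" and "int N dvd 2 * e - q" and cop: "\<And>z. coprime (1 - e * z) (int N)"
  shows "\<exists>M::int. \<forall>x. chi (1 + q * x) = exp (2 * pi * \<i> * of_int M * of_int (trunc_log e x) / of_nat N)"
proof -
  define f where "f x = chi (1 + q * x)" for x
  have f_cong: "f x = f y" if "int N dvd x - y" for x y
  proof -
    have "(1 + q * x) - (1 + q * y) = q * (x - y)" by (simp add: algebra_simps)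
    then have "int Q dvd (1 + q * x) - (1 + q * y)" using that QN by simp
    then show ?thesis unfolding f_def by (rule dirichlet_character_cong[OF dc])
  qed
  have f_mult: "f (x + y + q * x * y) = f x * f y" for x y
  proof -
    have "1 + q * (x + y + q * x * y) = (1 + q * x) * (1 + q * y)" by (simp add: algebra_simps)
    moreover have "chi (m * n) = chi m * chi n" for m n
      using dc by (simp add: dirichlet_character_def)
    ultimately show ?thesis by (simp add: f_def)
  qed
  have log_inj: "int N dvd x - y" if "int N dvd trunc_log e x - trunc_log e y" for x y
    using trunc_log_inj_cong[OF cop that] .
  have log_surj: "\<exists>x. int N dvd trunc_log e x - t" for t
    using inj_cong_imp_surj_cong[OF _ log_inj] \<open>N \<ge> 1\<close> by simp
  \<comment> \<open>f transported along the inverse of trunc_log modulo N\<close>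
  define g where "g t = f (SOME x. int N dvd trunc_log e x - t)" for t
  have g_eq: "g t = f x" if "int N dvd trunc_log e x - t" for x t
  proof -
    define y where "y = (SOME y. int N dvd trunc_log e y - t)"
    have "int N dvd trunc_log e y - t" unfolding y_def using that by (rule someI)
    then have "int N dvd (trunc_log e y - t) - (trunc_log e x - t)" using that by (rule dvd_diff)
    then have "int N dvd trunc_log e y - trunc_log e x" by simp
    then show ?thesis unfolding g_def y_def[symmetric] by (rule f_cong[OF log_inj])
  qed
  have "g (s + t) = g s * g t" for s t
  proof -
    obtain x where x: "int N dvd trunc_log e x - s" using log_surj by blast
    obtain y where y: "int N dvd trunc_log e y - t" using log_surj by blast
    have "int N dvd trunc_log e (x + y + q * x * y) - (trunc_log e x + trunc_log e y)"
      by (rule trunc_log_mult_cong) fact+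
    then have "int N dvd (trunc_log e (x + y + q * x * y) - (trunc_log e x + trunc_log e y))
        + (trunc_log e x - s) + (trunc_log e y - t)"
      using x y by (intro dvd_add)
    then have "int N dvd trunc_log e (x + y + q * x * y) - (s + t)" by (simp add: algebra_simps)
    then have "g (s + t) = f (x + y + q * x * y)" by (rule g_eq)
    also have "\<dots> = g s * g t" using f_mult g_eq[OF x] g_eq[OF y] by simp
    finally show ?thesis .
  qed
  moreover have "g 0 = 1" "g (int N) = 1"
    using g_eq[of 0] f_def dirichlet_character_one[OF dc] by simp_all
  ultimately obtain M where M: "\<forall>s. g s = exp (2 * pi * \<i> * of_int M * of_int s / of_nat N)"
    using periodic_mult_hom_int_eq_exp[OF \<open>N \<ge> 1\<close>] by blast
  have "chi (1 + q * x) = g (trunc_log e x)" for x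
    using g_eq[of x "trunc_log e x"] f_def by simp
  then show ?thesis using M by auto
qed

lemma coprime_one_minus_mult_prime_power:
  fixes e z :: int
  assumes "prime P" and "P dvd e"
  shows "coprime (1 - e * z) (P ^ k)"
proof -
  have "\<not> P dvd 1 - e * z"
  proof
    assume "P dvd 1 - e * z"
    then have "P dvd (1 - e * z) + e * z" using assms(2) by (intro dvd_add dvd_mult2)
    then show False using assms(1) not_prime_unit by (metis diff_add_cancel)
  qed
  then show ?thesis using assms(1) by (simp add: prime_imp_coprime coprime_commute)
qed

lemma prime_power_character_eq_exp_trunc_log:
  fixes p a b :: nat and e :: int
  assumes "prime p" and dc: "dirichlet_character (p ^ a) chi" and "b \<le> a" and "a \<le> 3 * b"
    and "int p dvd e" and "int (p ^ (a - b)) dvd 2 * e - int p ^ b"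
  shows "\<exists>M::int. \<forall>x. chi (1 + int p ^ b * x)
           = exp (2 * pi * \<i> * of_int M * of_int (trunc_log e x) / of_nat (p ^ (a - b)))"
proof (rule dirichlet_character_one_plus_eq_exp_trunc_log[OF dc])
  show "int (p ^ a) = int p ^ b * int (p ^ (a - b))"
    using \<open>b \<le> a\<close> by (simp add: power_add[symmetric])
  show "1 \<le> p ^ (a - b)" using prime_gt_0_nat[OF \<open>prime p\<close>] by simp
  show "int (p ^ (a - b)) dvd (int p ^ b)\<^sup>2"
    using \<open>a \<le> 3 * b\<close> by (simp add: power_mult[symmetric] le_imp_power_dvd)
  show "coprime (1 - e * z) (int (p ^ (a - b)))" for z
    unfolding of_nat_power using assms(1,5)
    by (intro coprime_one_minus_mult_prime_power) simp_all
qed fact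

lemma power_int_diff_of_nat:
  fixes x :: "'a::division_ring"
  assumes "b \<le> a"
  shows "x powi (int a - int b) = x ^ (a - b)"
proof -
  have "int a - int b = int (a - b)" using assms by (simp add: of_nat_diff)
  then show ?thesis by (simp only: power_int_of_nat)
qed

lemma power_int_diff_double_of_nat:
  fixes x :: "'a::field"
  assumes "x \<noteq> 0" and "b \<le> a"
  shows "x powi (int a - 2 * int b) = x ^ (a - b) / x ^ b"
proof -
  have "int a - 2 * int b = int (a - b) - int b" using assms(2) by (simp add: of_nat_diff)
  moreover have "x powi (int (a - b) - int b) = x powi int (a - b) / x powi int b"
    using assms(1) by (intro power_int_diff) blast
  ultimately show ?thesis by (simp only: power_int_of_nat)
qed

lemma odd_prime_power_character_one_plus:
  fixes p a b :: nat
  assumes "prime p" and "odd p" and dc: "dirichlet_character (p ^ a) chi"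
    and "1 \<le> b" and "b \<le> a" and "a \<le> 3 * b"
  shows "\<exists>L::int. \<forall>x::int. chi (1 + int p ^ b * x) =
           exp (4 * pi * \<i> * of_int L * of_int x / complex_of_real (real p powi (int a - int b))
                - 2 * pi * \<i> * of_int L * of_int (x ^ 2) / complex_of_real (real p powi (int a - 2 * int b)))"
proof -
  define q where "q = int p ^ b"
  define N where "N = p ^ (a - b)"
  \<comment> \<open>the inverse of 2 modulo p^a, so that q h plays the role of q/2\<close>
  define h where "h = (int p ^ a + 1) div 2"
  have q_N: "q * int N = int p ^ a" using \<open>b \<le> a\<close> by (simp add: q_def N_def power_add[symmetric])
  have "even (int p ^ a + 1)" using \<open>odd p\<close> by simp
  then have h: "2 * h = q * int N + 1" unfolding h_def q_N by (rule dvd_mult_div_cancel)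
  have "int N dvd 2 * (q * h) - q"
  proof -
    have "2 * (q * h) - q = q * (2 * h) - q" by (simp add: algebra_simps)
    also have "\<dots> = int N * q\<^sup>2" unfolding h by (simp add: algebra_simps power2_eq_square)
    finally show ?thesis by simp
  qed
  moreover have "int p dvd q * h" using \<open>1 \<le> b\<close> by (simp add: q_def dvd_power)
  ultimately obtain M where M: "\<forall>x. chi (1 + q * x) =
      exp (2 * pi * \<i> * of_int M * of_int (trunc_log (q * h) x) / of_nat N)"
    using prime_power_character_eq_exp_trunc_log[OF \<open>prime p\<close> dc \<open>b \<le> a\<close> \<open>a \<le> 3 * b\<close>]
    unfolding q_def N_def by blast
  have p0: "real p \<noteq> 0" using prime_gt_0_nat[OF \<open>prime p\<close>] by simp
  have chi_exp: "chi (1 + q * x) =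
        exp (4 * pi * \<i> * of_int (M * h) * of_int x / of_nat N
             - 2 * pi * \<i> * of_int (M * h) * of_int (x ^ 2) / (of_nat N / of_int q))" for x
  proof -
    have hc: "2 * (of_int h :: complex) = of_int q * of_nat N + 1"
      using arg_cong[OF h, of "of_int :: int \<Rightarrow> complex"] by simp
    have "4 * pi * \<i> * of_int (M * h) * of_int x / of_nat N
             - 2 * pi * \<i> * of_int (M * h) * of_int (x ^ 2) / (of_nat N / of_int q)
          - (2 * pi * \<i> * of_int M * of_int (trunc_log (q * h) x) / of_nat N
             + of_int (2 * (M * x * q)) * pi * \<i>)
          = 2 * pi * \<i> * of_int M * of_int x * (2 * of_int h - of_int q * of_nat N - 1) / of_nat N"
      using p0 by (simp add: q_def N_def trunc_log_def field_simps)
    then have "4 * pi * \<i> * of_int (M * h) * of_int x / of_nat N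
             - 2 * pi * \<i> * of_int (M * h) * of_int (x ^ 2) / (of_nat N / of_int q)
          = 2 * pi * \<i> * of_int M * of_int (trunc_log (q * h) x) / of_nat N
             + of_int (2 * (M * x * q)) * pi * \<i>"
      by (simp add: hc)
    then show ?thesis using M exp_eq by metis
  qed
  have "complex_of_real (real p powi (int a - int b)) = of_nat N"
    and "complex_of_real (real p powi (int a - 2 * int b)) = of_nat N / of_int q"
    using \<open>b \<le> a\<close> p0 by (simp_all add: N_def q_def power_int_diff_of_nat power_int_diff_double_of_nat)
  then show ?thesis
    using chi_exp unfolding q_def by (intro exI[of _ "M * h"] allI) simp
qed

lemma two_power_character_one_plus:
  fixes a b :: nat
  assumes dc: "dirichlet_character (2 ^ a) chi" and "2 \<le> b" and "b \<le> a" and "a \<le> 3 * b"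
  shows "\<exists>L1::int. \<forall>x::int. chi (1 + 2 ^ b * x) =
           exp (2 * pi * \<i> * of_int L1 * of_int x / complex_of_real (2 powi (int a - int b))
                - pi * \<i> * of_int L1 * of_int (x ^ 2) / complex_of_real (2 powi (int a - 2 * int b)))"
proof -
  define e :: int where "e = 2 ^ (b - 1)"
  define N where "N = (2::nat) ^ (a - b)"
  have q: "2 ^ b = 2 * e" using \<open>2 \<le> b\<close> by (simp add: e_def power_Suc[symmetric])
  have "int 2 dvd e" using \<open>2 \<le> b\<close> by (simp add: e_def dvd_power)
  moreover have "int (2 ^ (a - b)) dvd 2 * e - int 2 ^ b" by (simp add: q)
  ultimately obtain M where M: "\<And>x. chi (1 + int 2 ^ b * x) =
      exp (2 * pi * \<i> * of_int M * of_int (trunc_log e x) / of_nat N)"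
    using prime_power_character_eq_exp_trunc_log[OF two_is_prime_nat dc \<open>b \<le> a\<close> \<open>a \<le> 3 * b\<close>]
    unfolding N_def by blast
  have "(2::complex) ^ b = 2 * of_int e" using arg_cong[OF q, of "of_int :: int \<Rightarrow> complex"] by simp
  moreover have "(of_nat N :: complex) \<noteq> 0" by (simp add: N_def)
  ultimately have exponent: "2 * pi * \<i> * of_int M * of_int x / of_nat N
          - pi * \<i> * of_int M * of_int (x ^ 2) / (of_nat N / 2 ^ b)
        = 2 * pi * \<i> * of_int M * of_int (trunc_log e x) / of_nat N" for x
    by (simp add: trunc_log_def field_simps)
  have "complex_of_real (2 powi (int a - int b)) = of_nat N"
    and "complex_of_real (2 powi (int a - 2 * int b)) = of_nat N / 2 ^ b"
    using \<open>b \<le> a\<close> by (simp_all add: N_def power_int_diff_of_nat power_int_diff_double_of_nat)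
  then show ?thesis
    using M exponent by (intro exI[of _ M] allI) simp
qed

lemma even_linear_plus_square:
  fixes L2 L3 x :: int
  assumes "even (L2 + L3)"
  shows "even (L2 * x + L3 * x\<^sup>2)"
proof -
  have "L2 * x + L3 * x\<^sup>2 = (L2 + L3) * x + L3 * (x * x - x)"
    by (simp add: algebra_simps power2_eq_square)
  moreover have "even (x * x - x)" by (cases "even x") auto
  ultimately show ?thesis using assms by simp
qed

lemma neg_one_power_int_half_quadratic_mod_4:
  fixes L2 L3 x :: int
  assumes "even (L2 + L3)"
  shows "(-1::complex) powi ((L2 * x + L3 * x\<^sup>2) div 2)
       = (-1) powi ((L2 * (x mod 4) + L3 * (x mod 4)\<^sup>2) div 2)"
proof -
  define r where "r = x mod 4"
  define K where "K = 2 * L2 * (x div 4) + L3 * (4 * r * (x div 4) + 8 * (x div 4)\<^sup>2)"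
  have x: "x = r + 4 * (x div 4)" by (simp add: r_def)
  have "L2 * x + L3 * x\<^sup>2 = (L2 * r + L3 * r\<^sup>2) + 2 * K"
    by (subst (1 2) x) (simp add: K_def algebra_simps power2_eq_square)
  moreover have "even (L2 * r + L3 * r\<^sup>2)" using even_linear_plus_square[OF assms] .
  ultimately have "(L2 * x + L3 * x\<^sup>2) div 2 = (L2 * r + L3 * r\<^sup>2) div 2 + K" by auto
  moreover have "even K" by (simp add: K_def)
  ultimately show ?thesis unfolding r_def[symmetric] by (auto simp: power_int_minus_left)
qed

lemma character_mod_8_one_plus_two:
  assumes dc: "dirichlet_character (2 ^ a) chi" and "a \<le> 3"
  shows "\<exists>L2 L3::int. -1 \<le> L2 \<and> L2 \<le> 2 \<and> -1 \<le> L3 \<and> L3 \<le> 2 \<and>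
          (\<forall>x::int. even (L2 * x + L3 * x\<^sup>2) \<and>
             chi (1 + 2 * x) = (-1 :: complex) powi ((L2 * x + L3 * x\<^sup>2) div 2))"
proof -
  have mod_8: "chi m = chi n" if "8 dvd m - n" for m n
  proof -
    have "(2::int) ^ a dvd 2 ^ 3" using \<open>a \<le> 3\<close> by (rule le_imp_power_dvd)
    then have "int (2 ^ a) dvd m - n" using that by (simp add: dvd_trans)
    then show ?thesis by (rule dirichlet_character_cong[OF dc])
  qed
  have mult: "chi (m * n) = chi m * chi n" for m n
    using dc by (simp add: dirichlet_character_def)
  have one: "chi 1 = 1" by (rule dirichlet_character_one[OF dc])
  define s where "s = chi 3"
  define t where "t = chi 5"
  have "s\<^sup>2 = 1" unfolding s_def power2_eq_square using mult[of 3 3] mod_8[of 9 1] one by simp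
  then have s: "s = 1 \<or> s = -1" by (simp add: power2_eq_1_iff)
  have "t\<^sup>2 = 1" unfolding t_def power2_eq_square using mult[of 5 5] mod_8[of 25 1] one by simp
  then have t: "t = 1 \<or> t = -1" by (simp add: power2_eq_1_iff)
  have seven: "chi 7 = s * t" unfolding s_def t_def using mult[of 3 5] mod_8[of 15 7] by simp
  define v where "v r = (if r = 0 then 1 else if r = 1 then s else if r = 2 then t else s * t)" for r :: int
  have chi_mod_4: "chi (1 + 2 * x) = v (x mod 4)" for x
  proof -
    have "(1 + 2 * x) - (1 + 2 * (x mod 4)) = 8 * (x div 4)"
      using div_mult_mod_eq[of x 4] by linarith
    then have "chi (1 + 2 * x) = chi (1 + 2 * (x mod 4))" by (intro mod_8) simp
    moreover have "x mod 4 \<in> {0, 1, 2, 3}" by auto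
    ultimately show ?thesis using one seven by (auto simp: v_def s_def t_def)
  qed
  have witness: "\<exists>L2 L3::int. -1 \<le> L2 \<and> L2 \<le> 2 \<and> -1 \<le> L3 \<and> L3 \<le> 2 \<and>
          (\<forall>x::int. even (L2 * x + L3 * x\<^sup>2) \<and>
             chi (1 + 2 * x) = (-1 :: complex) powi ((L2 * x + L3 * x\<^sup>2) div 2))"
    if "even (L2 + L3)" and "-1 \<le> L2 \<and> L2 \<le> 2 \<and> -1 \<le> L3 \<and> L3 \<le> 2"
      and on_residues: "\<And>r. r \<in> {0, 1, 2, 3} \<Longrightarrow> v r = (-1) powi ((L2 * r + L3 * r\<^sup>2) div 2)"
    for L2 L3 :: int
  proof (intro exI conjI allI)
    fix x :: int
    show "even (L2 * x + L3 * x\<^sup>2)" using even_linear_plus_square[OF \<open>even (L2 + L3)\<close>] .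
    have "x mod 4 \<in> {0, 1, 2, 3}" by auto
    then have "chi (1 + 2 * x) = (-1) powi ((L2 * (x mod 4) + L3 * (x mod 4)\<^sup>2) div 2)"
      using chi_mod_4 on_residues by simp
    also have "\<dots> = (-1) powi ((L2 * x + L3 * x\<^sup>2) div 2)"
      by (rule neg_one_power_int_half_quadratic_mod_4[OF \<open>even (L2 + L3)\<close>, symmetric])
    finally show "chi (1 + 2 * x) = (-1) powi ((L2 * x + L3 * x\<^sup>2) div 2)" .
  qed (use that in auto)
  from s t show ?thesis
  proof (elim disjE)
    assume "s = 1" "t = 1"
    show ?thesis by (rule witness[of 0 0]) (use \<open>s = 1\<close> \<open>t = 1\<close> in \<open>auto simp: v_def\<close>)
  next
    assume "s = 1" "t = -1"
    show ?thesis by (rule witness[of 1 "-1"]) (use \<open>s = 1\<close> \<open>t = -1\<close> in \<open>auto simp: v_def\<close>)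
  next
    assume "s = -1" "t = 1"
    show ?thesis by (rule witness[of 2 0]) (use \<open>s = -1\<close> \<open>t = 1\<close> in \<open>auto simp: v_def\<close>)
  next
    assume "s = -1" "t = -1"
    show ?thesis by (rule witness[of 1 1]) (use \<open>s = -1\<close> \<open>t = -1\<close> in \<open>auto simp: v_def\<close>)
  qed
qed

lemma nat_ceiling_third_bounds:
  assumes "b = nat \<lceil>real a / 3\<rceil>"
  shows "a \<le> 3 * b" and "3 * b \<le> a + 2"
proof -
  have "real b = of_int \<lceil>real a / 3\<rceil>" using assms by simp
  then show "a \<le> 3 * b" and "3 * b \<le> a + 2"
    using ceiling_correct[of "real a / 3"] by linarith+
qed

theorem lemma2:
  fixes p a b :: nat and chi :: "int \<Rightarrow> complex"
  assumes "prime p" and "a \<ge> 1"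
    and "dirichlet_character (p ^ a) chi"
    and "b = nat \<lceil>real a / 3\<rceil>"
  shows
    "(odd p \<longrightarrow>
       (\<exists>L::int. \<forall>x::int.
          chi (1 + int p ^ b * x) =
            exp (4 * pi * \<i> * of_int L * of_int x / complex_of_real (real p powi (int a - int b))
                 - 2 * pi * \<i> * of_int L * of_int (x ^ 2) / complex_of_real (real p powi (int a - 2 * int b)))))
     \<and> (p = 2 \<and> a > 3 \<longrightarrow>
       (\<exists>L1::int. \<forall>x::int.
          chi (1 + 2 ^ b * x) =
            exp (2 * pi * \<i> * of_int L1 * of_int x / complex_of_real (2 powi (int a - int b))
                 - pi * \<i> * of_int L1 * of_int (x ^ 2) / complex_of_real (2 powi (int a - 2 * int b)))))
     \<and> (p = 2 \<and> a \<le> 3 \<longrightarrow>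
       (\<exists>L2 L3::int. -1 \<le> L2 \<and> L2 \<le> 2 \<and> -1 \<le> L3 \<and> L3 \<le> 2 \<and>
          (\<forall>x::int. even (L2 * x + L3 * x ^ 2) \<and>
             chi (1 + 2 ^ b * x) = (-1 :: complex) powi ((L2 * x + L3 * x ^ 2) div 2))))"
proof -
  note b_bounds = nat_ceiling_third_bounds[OF assms(4)]
  have "1 \<le> b" and "b \<le> a" using b_bounds \<open>a \<ge> 1\<close> by linarith+
  moreover have "3 < a \<Longrightarrow> 2 \<le> b" and "a \<le> 3 \<Longrightarrow> b = 1" using b_bounds \<open>1 \<le> b\<close> by linarith+
  ultimately show ?thesis
    using odd_prime_power_character_one_plus[OF assms(1) _ assms(3) _ _ b_bounds(1)]
      two_power_character_one_plus[OF _ _ _ b_bounds(1)]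
      character_mod_8_one_plus_two assms(3)
    by auto
qed

end
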